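(* Let $(S,K,I)$ be an active split graph. If $\Phi(S)$ is simple and connected but not complete, then the factor graph $\Phi(\overline{S})$ of the split graph $(\overline{S},I,K)$ is complete but not simple.
   Context: All graphs are finite and simple. A split graph is a graph $S$ whose vertex set is a disjoint union $V(S)=K\,\dot\cup\,I$ with $K$ a clique and $I$ an independent set; $(K,I)$ is called a bipartition of $S$, and $(S,K,I)$ denotes $S$ together with this fixed bipartition. $\overline{S}$ is the complement of $S$; it is a split graph with clique $I$ and independent set $K$. A 2-switch in a graph $G$ is performed on four distinct vertices $a,b,c,d$ with $ab,cd\in E(G)$ and $ac,bd\notin E(G)$: it deletes $ab,cd$ and adds $ac,bd$; $a,b,c,d$ are said to participate in it. A vertex is active in $G$ if it participates in some 2-switch on $G$; $G$ is active if all its vertices are active. For a split graph $(S,K,I)$ and distinct $u,v\in I$, $\sigma_{uv}(S)$ is the number of induced subgraphs of $S$ isomorphic to $P_4$ containing both $u$ and $v$. The factor graph $\Phi(S)$ is the loopless multigraph with vertex set $I$ having exactly $\sigma_{uv}(S)$ parallel edges between $u$ and $v$; it is simple if $\sigma_{uv}(S)\in\{0,1\}$ for all $u,v$. Graph notions (connected, complete, etc.) applied to $\Phi(S)$ refer to its underlying simple graph, in which $u\sim v$ iff $\sigma_{uv}(S)\ge1$. *)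

theory Defs
  imports Main
begin

definition simple_graph :: "'a set \<Rightarrow> 'a set set \<Rightarrow> bool" where
  "simple_graph V E \<longleftrightarrow> finite V \<and>
     (\<forall>e\<in>E. \<exists>a b. a \<noteq> b \<and> a \<in> V \<and> b \<in> V \<and> e = {a, b})"

definition split_graph :: "'a set \<Rightarrow> 'a set set \<Rightarrow> 'a set \<Rightarrow> 'a set \<Rightarrow> bool" where
  "split_graph V E K I \<longleftrightarrow> simple_graph V E \<and> K \<inter> I = {} \<and> K \<union> I = V \<and>
     (\<forall>a\<in>K. \<forall>b\<in>K. a \<noteq> b \<longrightarrow> {a, b} \<in> E) \<and>
     (\<forall>a\<in>I. \<forall>b\<in>I. {a, b} \<notin> E)"

definition compl_edges :: "'a set \<Rightarrow> 'a set set \<Rightarrow> 'a set set" where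
  "compl_edges V E = {{a, b} | a b. a \<in> V \<and> b \<in> V \<and> a \<noteq> b \<and> {a, b} \<notin> E}"

definition two_switch :: "'a set \<Rightarrow> 'a set set \<Rightarrow> 'a \<Rightarrow> 'a \<Rightarrow> 'a \<Rightarrow> 'a \<Rightarrow> bool" where
  "two_switch V E a b c d \<longleftrightarrow> distinct [a, b, c, d] \<and> {a, b, c, d} \<subseteq> V \<and>
     {a, b} \<in> E \<and> {c, d} \<in> E \<and> {a, c} \<notin> E \<and> {b, d} \<notin> E"

definition active_vertex :: "'a set \<Rightarrow> 'a set set \<Rightarrow> 'a \<Rightarrow> bool" where
  "active_vertex V E x \<longleftrightarrow> (\<exists>a b c d. two_switch V E a b c d \<and> x \<in> {a, b, c, d})"

definition active_graph :: "'a set \<Rightarrow> 'a set set \<Rightarrow> bool" where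
  "active_graph V E \<longleftrightarrow> (\<forall>x\<in>V. active_vertex V E x)"

definition induces_P4 :: "'a set \<Rightarrow> 'a set set \<Rightarrow> 'a set \<Rightarrow> bool" where
  "induces_P4 V E X \<longleftrightarrow> X \<subseteq> V \<and> (\<exists>a b c d. distinct [a, b, c, d] \<and> X = {a, b, c, d} \<and>
     {e \<in> E. e \<subseteq> X} = {{a, b}, {b, c}, {c, d}})"

definition sigma :: "'a set \<Rightarrow> 'a set set \<Rightarrow> 'a \<Rightarrow> 'a \<Rightarrow> nat" where
  "sigma V E u v = card {X. induces_P4 V E X \<and> u \<in> X \<and> v \<in> X}"

definition factor_adj :: "'a set \<Rightarrow> 'a set set \<Rightarrow> 'a set \<Rightarrow> 'a \<Rightarrow> 'a \<Rightarrow> bool" where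
  "factor_adj V E I u v \<longleftrightarrow> u \<in> I \<and> v \<in> I \<and> u \<noteq> v \<and> sigma V E u v \<ge> 1"

definition factor_simple :: "'a set \<Rightarrow> 'a set set \<Rightarrow> 'a set \<Rightarrow> bool" where
  "factor_simple V E I \<longleftrightarrow> (\<forall>u\<in>I. \<forall>v\<in>I. u \<noteq> v \<longrightarrow> sigma V E u v \<le> 1)"

definition factor_complete :: "'a set \<Rightarrow> 'a set set \<Rightarrow> 'a set \<Rightarrow> bool" where
  "factor_complete V E I \<longleftrightarrow> (\<forall>u\<in>I. \<forall>v\<in>I. u \<noteq> v \<longrightarrow> factor_adj V E I u v)"

definition factor_connected :: "'a set \<Rightarrow> 'a set set \<Rightarrow> 'a set \<Rightarrow> bool" where
  "factor_connected V E I \<longleftrightarrow> I \<noteq> {} \<and>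
     (\<forall>u\<in>I. \<forall>v\<in>I. (factor_adj V E I)\<^sup>*\<^sup>* u v)"

end

(*
  For u in I write N(u) for its set of neighbours in K. In a split graph the induced P4s
  through two vertices u, v of I are exactly the paths u - p - q - v with p in N(u) - N(v)
  and q in N(v) - N(u), so sigma_uv = |N(u) - N(v)| * |N(v) - N(u)|; complementation swaps
  the roles of K and I.

  If Phi(S) is simple, Phi-adjacent vertices have exactly one private neighbour each, so
  their neighbourhoods have the same size; by connectedness all N(u) have the same size.
  Hence |N(u) - N(v)| = |N(v) - N(u)| <= 1 for all u, v in I, and Phi-non-adjacent vertices
  are twins. For distinct x, y in K some vertex of I sees x but not y: otherwise every vertex
  seeing x also sees y, and a vertex u seeing x and a vertex w missing y (both exist by
  activity) would have x, y in N(u) - N(w). By the product formula in the complement this makes Phi of the complement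
  complete, and a pair of twins u, v, together with x in N(u) and y not in N(u), yields two
  distinct induced P4s of the complement through x and y.
*)

theory Submission
  imports Defs
begin

definition neighbours_in :: "'a set set \<Rightarrow> 'a set \<Rightarrow> 'a \<Rightarrow> 'a set" where
  "neighbours_in E A x = {y \<in> A. {x, y} \<in> E}"

lemma induces_P4I:
  assumes "simple_graph V E" "distinct [a, b, c, d]" "{a, b, c, d} \<subseteq> V"
    "{a, b} \<in> E" "{b, c} \<in> E" "{c, d} \<in> E" "{a, c} \<notin> E" "{b, d} \<notin> E" "{a, d} \<notin> E"
  shows "induces_P4 V E {a, b, c, d}"
proof -
  have "e \<in> {{a, b}, {b, c}, {c, d}}" if "e \<in> E" "e \<subseteq> {a, b, c, d}" for e
  proof -
    obtain p q where "p \<noteq> q" "e = {p, q}"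
      using \<open>e \<in> E\<close> assms(1) unfolding simple_graph_def by blast
    then show ?thesis
      using that assms(7-9) by (auto simp: insert_commute)
  qed
  then have "{e \<in> E. e \<subseteq> {a, b, c, d}} = {{a, b}, {b, c}, {c, d}}"
    using assms(4-6) by auto
  then show ?thesis
    unfolding induces_P4_def using assms(2,3) by blast
qed

lemma induces_P4E:
  assumes "induces_P4 V E X"
  obtains a b c d where "distinct [a, b, c, d]" "X = {a, b, c, d}" "X \<subseteq> V"
    "{a, b} \<in> E" "{b, c} \<in> E" "{c, d} \<in> E" "{a, c} \<notin> E" "{b, d} \<notin> E" "{a, d} \<notin> E"
proof -
  obtain a b c d where abcd: "distinct [a, b, c, d]" "X = {a, b, c, d}" "X \<subseteq> V"
    and edges: "{e \<in> E. e \<subseteq> X} = {{a, b}, {b, c}, {c, d}}"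
    using assms unfolding induces_P4_def by (elim conjE exE) simp
  have edge_iff: "e \<in> E \<longleftrightarrow> e \<in> {{a, b}, {b, c}, {c, d}}" if "e \<subseteq> X" for e
    using that edges by blast
  have "{a, b} \<in> E" "{b, c} \<in> E" "{c, d} \<in> E"
    using edge_iff[of "{a, b}"] edge_iff[of "{b, c}"] edge_iff[of "{c, d}"] abcd(2) by auto
  moreover have "{a, c} \<notin> E" "{b, d} \<notin> E" "{a, d} \<notin> E"
    using edge_iff[of "{a, c}"] edge_iff[of "{b, d}"] edge_iff[of "{a, d}"] abcd(1,2)
    by (auto simp: doubleton_eq_iff)
  ultimately show ?thesis
    using that abcd(1-3) by blast
qed

lemma split_graphD:
  assumes "split_graph V E K I"
  shows "simple_graph V E" "finite V" "K \<inter> I = {}" "K \<union> I = V"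
    "\<And>x y. x \<in> K \<Longrightarrow> y \<in> K \<Longrightarrow> x \<noteq> y \<Longrightarrow> {x, y} \<in> E"
    "\<And>x y. x \<in> I \<Longrightarrow> y \<in> I \<Longrightarrow> {x, y} \<notin> E"
  using assms by (simp_all add: split_graph_def simple_graph_def)

lemma split_graph_finite:
  assumes "split_graph V E K I"
  shows "finite K" "finite I"
  using split_graphD(2,4)[OF assms] by auto

lemma finite_neighbours_in: "finite A \<Longrightarrow> finite (neighbours_in E A x)"
  unfolding neighbours_in_def by simp

lemma split_graph_neighbour_in_clique:
  assumes "split_graph V E K I" "x \<in> I" "y \<in> V" "{x, y} \<in> E"
  shows "y \<in> K"
  using assms split_graphD[OF assms(1)] by blast

lemma split_graph_non_neighbour_in_independent:
  assumes "split_graph V E K I" "x \<in> K" "y \<in> V" "x \<noteq> y" "{x, y} \<notin> E"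
  shows "y \<in> I"
  using assms split_graphD[OF assms(1)] by blast

lemma induces_P4_split_graph_sides:
  assumes sp: "split_graph V E K I" and "distinct [a, b, c, d]" "{a, b, c, d} \<subseteq> V"
    and "{a, b} \<in> E" "{b, c} \<in> E" "{c, d} \<in> E" "{a, c} \<notin> E" "{b, d} \<notin> E"
  shows "a \<in> I" "b \<in> K" "c \<in> K" "d \<in> I"
proof -
  have no_I_edge: "\<not> (x \<in> I \<and> y \<in> I)" if "{x, y} \<in> E" for x y
    using that split_graphD(6)[OF sp] by blast
  show "b \<in> K"
  proof (rule ccontr)
    assume "b \<notin> K"
    then have "a \<in> K" "c \<in> K"
      using assms no_I_edge split_graphD(4)[OF sp] by (auto simp: insert_commute)
    then show False
      using assms split_graphD(5)[OF sp] by auto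
  qed
  show "c \<in> K"
  proof (rule ccontr)
    assume "c \<notin> K"
    then have "b \<in> K" "d \<in> K"
      using assms no_I_edge split_graphD(4)[OF sp] by (auto simp: insert_commute)
    then show False
      using assms split_graphD(5)[OF sp] by auto
  qed
  show "a \<in> I"
    using split_graph_non_neighbour_in_independent[OF sp \<open>c \<in> K\<close>, of a] assms
    by (auto simp: insert_commute)
  show "d \<in> I"
    using split_graph_non_neighbour_in_independent[OF sp \<open>b \<in> K\<close>, of d] assms by auto
qed

lemma two_switch_split_graph_sides:
  assumes sp: "split_graph V E K I" and "two_switch V E a b c d"
  shows "a \<in> I \<and> b \<in> K \<and> c \<in> K \<and> d \<in> I \<or> a \<in> K \<and> b \<in> I \<and> c \<in> I \<and> d \<in> K"
proof -
  have abcd: "distinct [a, b, c, d]" "{a, b, c, d} \<subseteq> V" "{a, b} \<in> E" "{c, d} \<in> E"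
    "{a, c} \<notin> E" "{b, d} \<notin> E"
    using assms(2) unfolding two_switch_def by simp_all
  note nb = split_graph_neighbour_in_clique[OF sp] and nn = split_graph_non_neighbour_in_independent[OF sp]
  have "a \<in> K \<or> a \<in> I"
    using abcd(2) split_graphD(4)[OF sp] by blast
  then show ?thesis
  proof
    assume "a \<in> I"
    then have "b \<in> K" using nb abcd by simp
    then have "d \<in> I" using nn abcd by simp
    then have "c \<in> K" using nb[of d c] abcd by (simp add: insert_commute)
    then show ?thesis using \<open>a \<in> I\<close> \<open>b \<in> K\<close> \<open>d \<in> I\<close> by simp
  next
    assume "a \<in> K"
    then have "c \<in> I" using nn abcd by simp
    then have "d \<in> K" using nb abcd by simp
    then have "b \<in> I" using nn[of d b] abcd by (auto simp: insert_commute)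
    then show ?thesis using \<open>a \<in> K\<close> \<open>c \<in> I\<close> \<open>d \<in> K\<close> by simp
  qed
qed

lemma active_vertex_split_graph:
  assumes sp: "split_graph V E K I" and "active_vertex V E x"
  shows "x \<in> I \<Longrightarrow> neighbours_in E K x \<notin> {{}, K}"
    and "x \<in> K \<Longrightarrow> neighbours_in E I x \<notin> {{}, I}"
proof -
  obtain a b c d where sw: "two_switch V E a b c d" and x: "x \<in> {a, b, c, d}"
    using assms(2) unfolding active_vertex_def by blast
  have abcd: "distinct [a, b, c, d]" "{a, b} \<in> E" "{c, d} \<in> E" "{a, c} \<notin> E" "{b, d} \<notin> E"
    using sw unfolding two_switch_def by simp_all
  have sides: "a \<in> I \<and> b \<in> K \<and> c \<in> K \<and> d \<in> I \<or> a \<in> K \<and> b \<in> I \<and> c \<in> I \<and> d \<in> K"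
    using two_switch_split_graph_sides[OF sp sw] .
  have "\<exists>y z. {x, y} \<in> E \<and> {x, z} \<notin> E \<and>
      (x \<in> I \<and> y \<in> K \<and> z \<in> K \<or> x \<in> K \<and> y \<in> I \<and> z \<in> I)"
  proof -
    from x consider "x = a" | "x = b" | "x = c" | "x = d" by blast
    then show ?thesis
    proof cases
      case 1
      then show ?thesis using abcd sides by (intro exI[of _ b] exI[of _ c]) auto
    next
      case 2
      then show ?thesis using abcd sides by (intro exI[of _ a] exI[of _ d]) (auto simp: insert_commute)
    next
      case 3
      then show ?thesis using abcd sides by (intro exI[of _ d] exI[of _ a]) (auto simp: insert_commute)
    next
      case 4
      then show ?thesis using abcd sides by (intro exI[of _ c] exI[of _ b]) (auto simp: insert_commute)
    qed
  qed
  then show "x \<in> I \<Longrightarrow> neighbours_in E K x \<notin> {{}, K}"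
    and "x \<in> K \<Longrightarrow> neighbours_in E I x \<notin> {{}, I}"
    using split_graphD(3)[OF sp]
    unfolding neighbours_in_def by blast+
qed

lemma induces_P4_private_neighbours:
  assumes sp: "split_graph V E K I" and uv: "u \<in> I" "v \<in> I" "u \<noteq> v"
    and p: "p \<in> neighbours_in E K u - neighbours_in E K v"
    and q: "q \<in> neighbours_in E K v - neighbours_in E K u"
  shows "induces_P4 V E {u, p, q, v}"
proof (rule induces_P4I)
  show "simple_graph V E"
    using split_graphD(1)[OF sp] .
  show "distinct [u, p, q, v]" "{u, p, q, v} \<subseteq> V"
    using uv p q split_graphD(3,4)[OF sp] unfolding neighbours_in_def by auto
  show "{u, p} \<in> E" "{q, v} \<in> E" "{u, q} \<notin> E" "{p, v} \<notin> E"
    using p q unfolding neighbours_in_def by (auto simp: insert_commute)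
  show "{p, q} \<in> E"
    using p q split_graphD(5)[OF sp] unfolding neighbours_in_def by auto
  show "{u, v} \<notin> E"
    using uv split_graphD(6)[OF sp] by blast
qed

lemma induces_P4_split_graph_private_neighbours:
  assumes sp: "split_graph V E K I" and uv: "u \<in> I" "v \<in> I" "u \<noteq> v"
    and X: "induces_P4 V E X" "u \<in> X" "v \<in> X"
  obtains p q where "p \<in> neighbours_in E K u - neighbours_in E K v"
    "q \<in> neighbours_in E K v - neighbours_in E K u" "X = {u, p, q, v}"
proof -
  obtain a b c d where abcd: "distinct [a, b, c, d]" "X = {a, b, c, d}" "X \<subseteq> V"
    "{a, b} \<in> E" "{b, c} \<in> E" "{c, d} \<in> E" "{a, c} \<notin> E" "{b, d} \<notin> E"
    using X(1) by (rule induces_P4E)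
  have sides: "a \<in> I" "b \<in> K" "c \<in> K" "d \<in> I"
    using induces_P4_split_graph_sides[OF sp abcd(1) _ abcd(4-8)] abcd(2,3) by simp_all
  then have "b \<notin> I" "c \<notin> I"
    using split_graphD(3)[OF sp] by blast+
  then have "u = a \<and> v = d \<or> u = d \<and> v = a"
    using uv X(2,3) abcd(2) by auto
  then show ?thesis
  proof
    assume "u = a \<and> v = d"
    then show ?thesis
      using that[of b c] sides abcd(1,2,4-8) unfolding neighbours_in_def by (simp add: insert_commute)
  next
    assume "u = d \<and> v = a"
    then show ?thesis
      using that[of c b] sides abcd(1,2,4-8) unfolding neighbours_in_def by (simp add: insert_commute)
  qed
qed

lemma inj_on_pairs_with_fixed_ends:
  assumes PQ: "P \<inter> Q = {}" "u \<notin> P \<union> Q" "v \<notin> P \<union> Q"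
  shows "inj_on (\<lambda>(p, q). {u, p, q, v}) (P \<times> Q)"
proof -
  have pairs_eq: "p = p' \<and> q = q'"
    if "p \<in> P" "q \<in> Q" "p' \<in> P" "q' \<in> Q" "{u, p, q, v} = {u, p', q', v}" for p q p' q'
  proof -
    have "p \<in> {u, p', q', v}" "q \<in> {u, p', q', v}"
      using that(5) by blast+
    then show ?thesis
      using that(1-4) PQ by blast
  qed
  show ?thesis
  proof (rule inj_onI)
    fix x y
    assume "x \<in> P \<times> Q" "y \<in> P \<times> Q" "(\<lambda>(p, q). {u, p, q, v}) x = (\<lambda>(p, q). {u, p, q, v}) y"
    moreover obtain p q p' q' where xy: "x = (p, q)" "y = (p', q')"
      by fastforce
    ultimately show "x = y"
      using pairs_eq[of p q p' q'] unfolding xy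
      by (simp only: mem_Times_iff prod.case prod.inject fst_conv snd_conv)
  qed
qed

lemma sigma_split_graph:
  assumes sp: "split_graph V E K I" and uv: "u \<in> I" "v \<in> I" "u \<noteq> v"
  shows "sigma V E u v =
    card (neighbours_in E K u - neighbours_in E K v) * card (neighbours_in E K v - neighbours_in E K u)"
proof -
  let ?P = "neighbours_in E K u - neighbours_in E K v"
    and ?Q = "neighbours_in E K v - neighbours_in E K u"
    and ?f = "\<lambda>(p, q). {u, p, q, v}"
  have "?P \<inter> ?Q = {}" "u \<notin> ?P \<union> ?Q" "v \<notin> ?P \<union> ?Q"
    using uv split_graphD(3)[OF sp] unfolding neighbours_in_def by auto
  then have "inj_on ?f (?P \<times> ?Q)"
    by (rule inj_on_pairs_with_fixed_ends)
  moreover have "?f ` (?P \<times> ?Q) = {X. induces_P4 V E X \<and> u \<in> X \<and> v \<in> X}"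
  proof
    show "?f ` (?P \<times> ?Q) \<subseteq> {X. induces_P4 V E X \<and> u \<in> X \<and> v \<in> X}"
      using induces_P4_private_neighbours[OF sp uv] by force
    show "{X. induces_P4 V E X \<and> u \<in> X \<and> v \<in> X} \<subseteq> ?f ` (?P \<times> ?Q)"
    proof
      fix X
      assume "X \<in> {X. induces_P4 V E X \<and> u \<in> X \<and> v \<in> X}"
      then obtain p q where "p \<in> ?P" "q \<in> ?Q" "X = {u, p, q, v}"
        using induces_P4_split_graph_private_neighbours[OF sp uv] by blast
      then show "X \<in> ?f ` (?P \<times> ?Q)"
        by (intro rev_image_eqI[of "(p, q)"]) simp_all
    qed
  qed
  ultimately have "bij_betw ?f (?P \<times> ?Q) {X. induces_P4 V E X \<and> u \<in> X \<and> v \<in> X}"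
    unfolding bij_betw_def by blast
  then have "card (?P \<times> ?Q) = sigma V E u v"
    unfolding sigma_def by (rule bij_betw_same_card)
  then show ?thesis
    unfolding card_cartesian_product by (rule sym)
qed

lemma compl_edges_doubleton_iff:
  assumes "a \<in> V" "b \<in> V" "a \<noteq> b"
  shows "{a, b} \<in> compl_edges V E \<longleftrightarrow> {a, b} \<notin> E"
proof
  assume "{a, b} \<in> compl_edges V E"
  then obtain c d where "{a, b} = {c, d}" "{c, d} \<notin> E"
    unfolding compl_edges_def mem_Collect_eq by (elim exE conjE) simp
  then show "{a, b} \<notin> E"
    by simp
next
  assume "{a, b} \<notin> E"
  then show "{a, b} \<in> compl_edges V E"
    using assms unfolding compl_edges_def by blast
qed

lemma split_graph_compl_edges:
  assumes sp: "split_graph V E K I"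
  shows "split_graph V (compl_edges V E) I K"
  unfolding split_graph_def
proof (intro conjI ballI impI)
  show "simple_graph V (compl_edges V E)"
    using split_graphD(2)[OF sp] unfolding simple_graph_def compl_edges_def by blast
  show "I \<inter> K = {}" "I \<union> K = V"
    using split_graphD(3,4)[OF sp] by blast+
  fix a b
  show "{a, b} \<in> compl_edges V E" if "a \<in> I" "b \<in> I" "a \<noteq> b"
  proof -
    have "a \<in> V" "b \<in> V"
      using that split_graphD(4)[OF sp] by blast+
    then show ?thesis
      using that split_graphD(6)[OF sp] compl_edges_doubleton_iff by metis
  qed
  show "{a, b} \<notin> compl_edges V E" if "a \<in> K" "b \<in> K"
  proof (cases "a = b")
    case True
    then show ?thesis
      unfolding compl_edges_def by (auto simp: doubleton_eq_iff)
  next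
    case False
    have "a \<in> V" "b \<in> V"
      using that split_graphD(4)[OF sp] by blast+
    then show ?thesis
      using that False split_graphD(5)[OF sp] compl_edges_doubleton_iff by metis
  qed
qed

lemma neighbours_in_compl_edges:
  assumes "A \<subseteq> V" "x \<in> V" "x \<notin> A"
  shows "neighbours_in (compl_edges V E) A x = A - neighbours_in E A x"
  using assms compl_edges_doubleton_iff[of x V] unfolding neighbours_in_def by blast

lemma sigma_compl_edges_split_graph:
  assumes sp: "split_graph V E K I" and xy: "x \<in> K" "y \<in> K" "x \<noteq> y"
  shows "sigma V (compl_edges V E) x y =
    card (neighbours_in E I y - neighbours_in E I x) * card (neighbours_in E I x - neighbours_in E I y)"
proof -
  have compl: "neighbours_in (compl_edges V E) I z = I - neighbours_in E I z" if "z \<in> K" for z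
    using that split_graphD(3,4)[OF sp] by (intro neighbours_in_compl_edges) auto
  have "(I - neighbours_in E I z) - (I - neighbours_in E I z') = neighbours_in E I z' - neighbours_in E I z"
    for z z'
    unfolding neighbours_in_def by blast
  then show ?thesis
    using sigma_split_graph[OF split_graph_compl_edges[OF sp] xy] compl xy by simp
qed

lemma card_Diff_eq_card_Diff_iff:
  assumes "finite A" "finite B"
  shows "card (A - B) = card (B - A) \<longleftrightarrow> card A = card B"
  using card_Int_Diff[OF assms(1), of B] card_Int_Diff[OF assms(2), of A]
  by (simp add: Int_commute)

lemma card_neighbours_in_eq_if_factor_adj:
  assumes sp: "split_graph V E K I" and "factor_simple V E I" "factor_adj V E I u v"
  shows "card (neighbours_in E K u) = card (neighbours_in E K v)"
proof -
  have uv: "u \<in> I" "v \<in> I" "u \<noteq> v" and "sigma V E u v \<ge> 1"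
    using assms(3) unfolding factor_adj_def by simp_all
  moreover have "sigma V E u v \<le> 1"
    using assms(2) uv unfolding factor_simple_def by blast
  ultimately have "sigma V E u v = 1"
    by linarith
  then have "card (neighbours_in E K u - neighbours_in E K v) *
      card (neighbours_in E K v - neighbours_in E K u) = 1"
    using sigma_split_graph[OF sp uv] by simp
  then have "card (neighbours_in E K u - neighbours_in E K v) = 1"
    "card (neighbours_in E K v - neighbours_in E K u) = 1"
    by simp_all
  then show ?thesis
    using card_Diff_eq_card_Diff_iff finite_neighbours_in split_graph_finite(1)[OF sp] by metis
qed

lemma card_neighbours_in_eq_if_factor_connected:
  assumes sp: "split_graph V E K I" and simple: "factor_simple V E I"
    and "factor_connected V E I" "u \<in> I" "v \<in> I"
  shows "card (neighbours_in E K u) = card (neighbours_in E K v)"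
proof -
  have "(factor_adj V E I)\<^sup>*\<^sup>* u v"
    using assms(3-5) unfolding factor_connected_def by blast
  then show ?thesis
  proof (induction rule: rtranclp_induct)
    case (step v w)
    then show ?case
      using card_neighbours_in_eq_if_factor_adj[OF sp simple] by simp
  qed simp
qed

lemma card_private_neighbours_eq:
  assumes sp: "split_graph V E K I" and "factor_simple V E I" "factor_connected V E I" "u \<in> I" "v \<in> I"
  shows "card (neighbours_in E K u - neighbours_in E K v) = card (neighbours_in E K v - neighbours_in E K u)"
  using card_neighbours_in_eq_if_factor_connected[OF assms] card_Diff_eq_card_Diff_iff
    finite_neighbours_in split_graph_finite(1)[OF sp] by metis

lemma card_private_neighbours_le_one:
  assumes sp: "split_graph V E K I" and simple: "factor_simple V E I"
    and conn: "factor_connected V E I" and uv: "u \<in> I" "v \<in> I"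
  shows "card (neighbours_in E K u - neighbours_in E K v) \<le> 1"
proof (cases "u = v")
  case False
  let ?d = "card (neighbours_in E K u - neighbours_in E K v)"
  have "?d \<le> ?d * ?d"
    by (rule le_square)
  also have "\<dots> = sigma V E u v"
    using sigma_split_graph[OF sp uv False] card_private_neighbours_eq[OF sp simple conn uv] by simp
  also have "\<dots> \<le> 1"
    using simple uv False unfolding factor_simple_def by blast
  finally show ?thesis .
qed simp

lemma neighbours_in_eq_if_not_factor_adj:
  assumes sp: "split_graph V E K I" and simple: "factor_simple V E I"
    and conn: "factor_connected V E I" and uv: "u \<in> I" "v \<in> I"
    and "\<not> factor_adj V E I u v"
  shows "neighbours_in E K u = neighbours_in E K v"
proof (cases "u = v")
  case False
  then have "sigma V E u v = 0"
    using assms(6) uv unfolding factor_adj_def by simp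
  then have "card (neighbours_in E K u - neighbours_in E K v) = 0"
    "card (neighbours_in E K v - neighbours_in E K u) = 0"
    using sigma_split_graph[OF sp uv False] card_private_neighbours_eq[OF sp simple conn uv] by simp_all
  then show ?thesis
    using finite_neighbours_in[OF split_graph_finite(1)[OF sp]] by (simp add: Diff_eq_empty_iff)
qed simp

lemma neighbours_in_not_subset:
  assumes sp: "split_graph V E K I" and active: "active_graph V E"
    and le_one: "\<And>u v. u \<in> I \<Longrightarrow> v \<in> I \<Longrightarrow> card (neighbours_in E K u - neighbours_in E K v) \<le> 1"
    and xy: "x \<in> K" "y \<in> K" "x \<noteq> y"
  shows "\<not> neighbours_in E I x \<subseteq> neighbours_in E I y"
proof
  assume sub: "neighbours_in E I x \<subseteq> neighbours_in E I y"
  have "active_vertex V E z" if "z \<in> K" for z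
    using that active split_graphD(4)[OF sp] unfolding active_graph_def by blast
  then have "neighbours_in E I x \<noteq> {}" "neighbours_in E I y \<noteq> I"
    using active_vertex_split_graph(2)[OF sp] xy by blast+
  moreover have "neighbours_in E I y \<subseteq> I"
    unfolding neighbours_in_def by blast
  ultimately obtain u w where u: "u \<in> neighbours_in E I x" and w: "w \<in> I - neighbours_in E I y"
    by blast
  then have "w \<notin> neighbours_in E I x"
    using sub by blast
  then have "u \<in> I" "w \<in> I" "{x, y} \<subseteq> neighbours_in E K u - neighbours_in E K w"
    using u w sub xy(1,2) by (auto simp: neighbours_in_def insert_commute)
  then have "card {x, y} \<le> card (neighbours_in E K u - neighbours_in E K w)"
    using finite_neighbours_in[OF split_graph_finite(1)[OF sp]] by (intro card_mono) auto
  then show False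
    using le_one[OF \<open>u \<in> I\<close> \<open>w \<in> I\<close>] xy(3) by simp
qed

lemma factor_complete_compl_edges:
  assumes sp: "split_graph V E K I" and active: "active_graph V E"
    and le_one: "\<And>u v. u \<in> I \<Longrightarrow> v \<in> I \<Longrightarrow> card (neighbours_in E K u - neighbours_in E K v) \<le> 1"
  shows "factor_complete V (compl_edges V E) K"
  unfolding factor_complete_def factor_adj_def
proof (intro ballI impI conjI)
  fix x y
  assume xy: "x \<in> K" "y \<in> K" "x \<noteq> y"
  have "neighbours_in E I x - neighbours_in E I y \<noteq> {}" "neighbours_in E I y - neighbours_in E I x \<noteq> {}"
    using neighbours_in_not_subset[OF sp active le_one] xy by blast+
  then show "1 \<le> sigma V (compl_edges V E) x y"
    using sigma_compl_edges_split_graph[OF sp xy] finite_neighbours_in[OF split_graph_finite(2)[OF sp]]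
    by (simp add: Suc_le_eq card_gt_0_iff)
qed

lemma not_factor_simple_compl_edges_if_twins:
  assumes sp: "split_graph V E K I" and active: "active_graph V E"
    and le_one: "\<And>u v. u \<in> I \<Longrightarrow> v \<in> I \<Longrightarrow> card (neighbours_in E K u - neighbours_in E K v) \<le> 1"
    and uv: "u \<in> I" "v \<in> I" "u \<noteq> v" and twins: "neighbours_in E K u = neighbours_in E K v"
  shows "\<not> factor_simple V (compl_edges V E) K"
proof -
  have "active_vertex V E u"
    using active uv(1) split_graphD(4)[OF sp] unfolding active_graph_def by blast
  then obtain x y where x: "x \<in> neighbours_in E K u" and y: "y \<in> K - neighbours_in E K u"
    using active_vertex_split_graph(1)[OF sp _ uv(1)] unfolding neighbours_in_def by blast
  then have xy: "x \<in> K" "y \<in> K" "x \<noteq> y"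
    unfolding neighbours_in_def by auto
  have fin: "finite (neighbours_in E I z - neighbours_in E I z')" for z z'
    using finite_neighbours_in[OF split_graph_finite(2)[OF sp]] by blast
  have "{u, v} \<subseteq> neighbours_in E I x - neighbours_in E I y"
    using x y twins uv(1,2) by (auto simp: neighbours_in_def insert_commute)
  then have "card {u, v} \<le> card (neighbours_in E I x - neighbours_in E I y)"
    by (rule card_mono[OF fin])
  then have "2 \<le> card (neighbours_in E I x - neighbours_in E I y)"
    using uv(3) by simp
  moreover have "1 \<le> card (neighbours_in E I y - neighbours_in E I x)"
    using neighbours_in_not_subset[OF sp active le_one xy(2,1)] xy(3) fin
    by (simp add: Suc_le_eq card_gt_0_iff)
  ultimately have "1 * 2 \<le> sigma V (compl_edges V E) x y"
    unfolding sigma_compl_edges_split_graph[OF sp xy] by (rule mult_le_mono[rotated])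
  then show ?thesis
    using xy unfolding factor_simple_def by fastforce
qed

theorem corollary5p4:
  fixes V :: "'a set" and E :: "'a set set" and K I :: "'a set"
  assumes "split_graph V E K I"
    and "active_graph V E"
    and "factor_simple V E I"
    and "factor_connected V E I"
    and "\<not> factor_complete V E I"
  shows "factor_complete V (compl_edges V E) K \<and> \<not> factor_simple V (compl_edges V E) K"
proof -
  note le_one = card_private_neighbours_le_one[OF assms(1,3,4)]
  obtain u v where uv: "u \<in> I" "v \<in> I" "u \<noteq> v" "\<not> factor_adj V E I u v"
    using assms(5) unfolding factor_complete_def by blast
  then have "neighbours_in E K u = neighbours_in E K v"
    using neighbours_in_eq_if_not_factor_adj[OF assms(1,3,4)] by blast
  then show ?thesis
    using factor_complete_compl_edges[OF assms(1,2) le_one]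
      not_factor_simple_compl_edges_if_twins[OF assms(1,2) le_one uv(1-3)] by blast
qed

end
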